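(* Let $\alpha>0$, let $K\subseteq\mathbb{R}^d$ be a closed convex cone and $P\in\mathbb{R}^{d\times d}$ non-singular, and set $K'=PK=\{Px:x\in K\}$. Let $\mathcal{A}=\{y\in\mathbb{R}^d: x^Ty\le\|Px\|\,\alpha\ \text{for all }x\in K\}$ and $\mathcal{B}=P^T\big(\{\tilde{y}\in\mathbb{R}^d:\|p_{K'}(\tilde{y})\|\le\alpha\}\big)=\{P^T\tilde{y}:\|p_{K'}(\tilde{y})\|\le\alpha\}$. Then $\mathcal{A}=\mathcal{B}$.
   Context: $\|\cdot\|$ is the Euclidean norm. For a closed convex set $C\subset\mathbb{R}^d$ and $y\in\mathbb{R}^d$, the projection $p_C(y)$ is the unique point of $C$ with $\|p_C(y)-y\|=\inf_{x\in C}\|x-y\|$. *)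

theory Defs
  imports "HOL-Analysis.Analysis"
begin

definition proj :: "('a::euclidean_space) set \<Rightarrow> 'a \<Rightarrow> 'a" where
  "proj C y = (THE p. p \<in> C \<and> norm (p - y) = (INF x\<in>C. norm (x - y)))"

end

theory Submission
  imports Defs
begin

text \<open>For a closed convex cone \<open>C\<close> with projection \<open>p\<close> of \<open>y\<close>, the residual \<open>y - p\<close>
  lies in the polar cone and is orthogonal to \<open>p\<close>; hence \<open>z \<bullet> y \<le> z \<bullet> p\<close> on \<open>C\<close>
  with equality at \<open>z = p\<close>. Cauchy-Schwarz then shows that \<open>\<parallel>p\<parallel> \<le> \<alpha>\<close> exactly when
  \<open>z \<bullet> y \<le> \<alpha> \<parallel>z\<parallel>\<close> on \<open>C\<close>. Applied to \<open>K' = P K\<close> and \<open>y = P\<^sup>T y\<^sub>0\<close>, together with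
  \<open>(P x) \<bullet> y\<^sub>0 = x \<bullet> P\<^sup>T y\<^sub>0\<close> and surjectivity of \<open>P\<^sup>T\<close>, this gives the theorem.\<close>

lemma proj_eq_closest_point:
  fixes C :: "'a::euclidean_space set"
  assumes "closed C" "convex C" "C \<noteq> {}"
  shows "proj C y = closest_point C y"
  unfolding proj_def
proof (rule the_equality)
  let ?c = "closest_point C y"
  have "?c \<in> C" using closest_point_in_set[OF assms(1,3)] .
  moreover have "norm (?c - y) \<le> norm (x - y)" if "x \<in> C" for x
    using closest_point_le[OF assms(1) that] by (metis dist_norm norm_minus_commute)
  ultimately show "?c \<in> C \<and> norm (?c - y) = (INF x\<in>C. norm (x - y))"
    by (auto intro!: cInf_eq_minimum[symmetric])
  fix p assume p: "p \<in> C \<and> norm (p - y) = (INF x\<in>C. norm (x - y))"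
  have "dist y p \<le> dist y z" if "z \<in> C" for z
  proof -
    have "(INF x\<in>C. norm (x - y)) \<le> norm (z - y)"
      by (rule cINF_lower[OF _ that]) (auto intro: bdd_belowI[of _ 0])
    then show ?thesis using p by (simp add: dist_norm norm_minus_commute)
  qed
  then show "p = ?c" using closest_point_unique[OF assms(2,1)] p by blast
qed

lemma closest_point_cone_orthogonal:
  fixes C :: "'a::euclidean_space set"
  assumes "closed C" "convex C" "cone C" "C \<noteq> {}"
  shows "(y - closest_point C y) \<bullet> closest_point C y = 0"
proof -
  let ?p = "closest_point C y"
  have dot: "(y - ?p) \<bullet> (x - ?p) \<le> 0" if "x \<in> C" for x
    using closest_point_dot[OF assms(2,1) that] .
  have "?p \<in> C" using closest_point_in_set[OF assms(1,4)] .
  then have "2 *\<^sub>R ?p \<in> C" "0 \<in> C"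
    using assms(3,4) by (auto simp: cone_def cone_contains_0)
  from dot[OF this(1)] dot[OF this(2)] show ?thesis
    by (simp add: inner_diff_right algebra_simps)
qed

lemma closest_point_cone_inner_le:
  fixes C :: "'a::euclidean_space set"
  assumes "closed C" "convex C" "cone C" "z \<in> C"
  shows "z \<bullet> y \<le> z \<bullet> closest_point C y"
proof -
  let ?p = "closest_point C y"
  have "C \<noteq> {}" using assms(4) by blast
  have "(y - ?p) \<bullet> (z - ?p) \<le> 0" using closest_point_dot[OF assms(2,1,4)] .
  with closest_point_cone_orthogonal[OF assms(1-3) \<open>C \<noteq> {}\<close>]
  have "(y - ?p) \<bullet> z \<le> 0" by (auto simp: inner_diff_right)
  then show ?thesis by (simp add: inner_diff_right inner_commute)
qed

lemma norm_closest_point_cone_le_iff: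
  fixes C :: "'a::euclidean_space set"
  assumes "closed C" "convex C" "cone C" "C \<noteq> {}" "\<alpha> \<ge> 0"
  shows "norm (closest_point C y) \<le> \<alpha> \<longleftrightarrow> (\<forall>z\<in>C. z \<bullet> y \<le> norm z * \<alpha>)"
proof
  let ?p = "closest_point C y"
  assume "norm ?p \<le> \<alpha>"
  show "\<forall>z\<in>C. z \<bullet> y \<le> norm z * \<alpha>"
  proof
    fix z assume "z \<in> C"
    have "z \<bullet> y \<le> z \<bullet> ?p" using closest_point_cone_inner_le[OF assms(1-3) \<open>z \<in> C\<close>] .
    also have "\<dots> \<le> norm z * norm ?p" by (rule Cauchy_Schwarz_ineq2[THEN abs_le_D1])
    also have "\<dots> \<le> norm z * \<alpha>" using \<open>norm ?p \<le> \<alpha>\<close> by (simp add: mult_left_mono)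
    finally show "z \<bullet> y \<le> norm z * \<alpha>" .
  qed
next
  let ?p = "closest_point C y"
  assume bound: "\<forall>z\<in>C. z \<bullet> y \<le> norm z * \<alpha>"
  have "norm ?p * norm ?p = ?p \<bullet> ?p"
    by (simp add: power2_norm_eq_inner[symmetric] power2_eq_square)
  also have "\<dots> = ?p \<bullet> y"
    using closest_point_cone_orthogonal[OF assms(1-4), of y]
    by (simp add: inner_diff_right inner_commute algebra_simps)
  also have "\<dots> \<le> norm ?p * \<alpha>"
    using bound closest_point_in_set[OF assms(1,4)] by blast
  finally show "norm ?p \<le> \<alpha>"
    using assms(5) by (cases "norm ?p = 0") (auto simp: mult_le_cancel_left)
qed

lemma matrix_image_closed_convex_cone:
  fixes P :: "real^'n^'n"
  assumes "invertible P" "closed K" "convex K" "cone K"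
  shows "closed ((*v) P ` K)" "convex ((*v) P ` K)" "cone ((*v) P ` K)"
proof -
  show "closed ((*v) P ` K)"
    by (rule closed_injective_linear_image[OF assms(2)])
      (auto simp: inj_matrix_vector_mult[OF assms(1)])
  show "convex ((*v) P ` K)" by (rule convex_linear_image[OF _ assms(3)]) simp
  show "cone ((*v) P ` K)"
    using assms(4) by (auto simp: cone_def matrix_vector_mult_scaleR[symmetric])
qed

lemma surj_transpose_matrix_vector_mult:
  fixes P :: "real^'n^'n"
  assumes "invertible P"
  shows "surj ((*v) (transpose P))"
  using assms matrix_right_invertible_surjective transpose_invertible
  unfolding invertible_def by blast

lemma inner_transpose_matrix_vector_mult:
  "x \<bullet> (transpose P *v y) = (P *v x) \<bullet> (y :: real^'n)"
  by (metis inner_commute dot_lmul_matrix transpose_matrix_vector)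

theorem mainTheorem17:
  fixes \<alpha> :: real and K :: "(real^'n) set" and P :: "real^'n^'n"
  assumes "\<alpha> > 0"
    and "closed K" and "convex K" and "cone K" and "0 \<in> K"
    and "invertible P"
  defines "K' \<equiv> (\<lambda>x. P *v x) ` K"
  shows "{y. \<forall>x\<in>K. x \<bullet> y \<le> norm (P *v x) * \<alpha>}
       = (\<lambda>yt. transpose P *v yt) ` {yt. norm (proj K' yt) \<le> \<alpha>}"
proof -
  note K'_cone = matrix_image_closed_convex_cone[OF assms(6,2-4), folded K'_def]
  have "K' \<noteq> {}" using assms(5) unfolding K'_def by blast
  have "norm (proj K' yt) \<le> \<alpha> \<longleftrightarrow> transpose P *v yt \<in> {y. \<forall>x\<in>K. x \<bullet> y \<le> norm (P *v x) * \<alpha>}"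
    for yt
    using norm_closest_point_cone_le_iff[OF K'_cone \<open>K' \<noteq> {}\<close>, of \<alpha> yt] assms(1)
      proj_eq_closest_point[OF K'_cone(1,2) \<open>K' \<noteq> {}\<close>]
    by (simp add: K'_def inner_transpose_matrix_vector_mult del: transpose_matrix_vector)
  with surj_transpose_matrix_vector_mult[OF assms(6)] show ?thesis
    by (auto simp: image_iff)
qed

end
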